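(* For $K>K^*:=\frac{b\sigma_1}{b-\mu_0}$ let $G_3(K)=(S(K),I_1(K),0,0,R(K))$ be the unique equilibrium of the system below with $S,I_1,R>0$, and let $R^{**}=\frac{K}{b}(b-\mu_4')$. Then, as $K\to\infty$, $$R(K)=R^{**}+O(1),\qquad I_1(K)=\frac{\mu_4'-\mu_0}{\alpha_1}+O\!\left(\frac1K\right),\qquad S(K)=\frac{\mu_1-\mu_4'}{\alpha_1}+O\!\left(\frac1K\right).$$ In particular $R(K)\to\infty$ as $K\to\infty$, i.e. the recovered component of $G_3$ is not bounded uniformly in $K$.
   Context: Consider, for $t\ge0$, the system $S'=\big(b(1-\tfrac{N}{K})-\alpha_1I_1-\alpha_2I_2-(\beta_1+\beta_2+\alpha_3)I_{12}-\mu_0\big)S$, $I_1'=\big(b(1-\tfrac{N}{K})+\alpha_1S-\eta_1I_{12}-\gamma_1I_2-\mu_1\big)I_1+\beta_1SI_{12}$, $I_2'=\big(b(1-\tfrac{N}{K})+\alpha_2S-\eta_2I_{12}-\gamma_2I_1-\mu_2\big)I_2+\beta_2SI_{12}$, $I_{12}'=\big(b(1-\tfrac{N}{K})+\alpha_3S+\eta_1I_1+\eta_2I_2-\mu_3\big)I_{12}+(\gamma_1+\gamma_2)I_1I_2$, $R'=\big(b(1-\tfrac{N}{K})-\mu_4'\big)R+\rho_1I_1+\rho_2I_2+\rho_3I_{12}$, where $N=S+I_1+I_2+I_{12}+R$. All parameters $b,K,\alpha_i,\beta_i,\gamma_i,\eta_i,\rho_i,\mu_0,\mu_i'$ are positive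 and $\mu_i=\rho_i+\mu_i'$ for $i=1,2,3$; $K$ is regarded as a varying parameter, the others fixed. Standing assumptions: $b>\mu_0$, $b>\mu_i$ ($i=1,2,3$), $b>\mu_4'$, and $\mu_0<\mu_4'<\mu_j'$ for $j=1,2,3$. Set $\sigma_k=(\mu_k-\mu_0)/\alpha_k$ ($k=1,2,3$), assumed to satisfy $\sigma_1<\sigma_2<\sigma_3$, and $S^{**}=\frac{K}{b}(b-\mu_0)$. *)

theory Defs
  imports "HOL-Analysis.Analysis" "HOL-Library.Landau_Symbols"
begin

text \<open>Parameters:
 b, K; a1 a2 a3 (alpha_i); be1 be2 (beta_i); g1 g2 (gamma_i); e1 e2 (eta_i);
 r1 r2 r3 (rho_i); m0 (mu_0); m1 m2 m3 (mu_i = rho_i + mu_i'); m4' (mu_4').\<close>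

definition logistic :: "real \<Rightarrow> real \<Rightarrow> real \<Rightarrow> real" where
  "logistic b K N = b * (1 - N / K)"

definition is_equilibrium ::
  "real \<Rightarrow> real \<Rightarrow> real \<Rightarrow> real \<Rightarrow> real \<Rightarrow> real \<Rightarrow> real \<Rightarrow> real \<Rightarrow> real \<Rightarrow> real \<Rightarrow> real
   \<Rightarrow> real \<Rightarrow> real \<Rightarrow> real \<Rightarrow> real \<Rightarrow> real \<Rightarrow> real \<Rightarrow> real \<Rightarrow> real \<Rightarrow> real
   \<Rightarrow> real \<Rightarrow> real \<Rightarrow> real \<Rightarrow> real \<Rightarrow> bool" where
  "is_equilibrium b K a1 a2 a3 be1 be2 g1 g2 e1 e2 r1 r2 r3 m0 m1 m2 m3 m4'
      S I1 I2 I12 R \<longleftrightarrow>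
    (let L = logistic b K (S + I1 + I2 + I12 + R) in
      (L - a1 * I1 - a2 * I2 - (be1 + be2 + a3) * I12 - m0) * S = 0 \<and>
      (L + a1 * S - e1 * I12 - g1 * I2 - m1) * I1 + be1 * S * I12 = 0 \<and>
      (L + a2 * S - e2 * I12 - g2 * I1 - m2) * I2 + be2 * S * I12 = 0 \<and>
      (L + a3 * S + e1 * I1 + e2 * I2 - m3) * I12 + (g1 + g2) * I1 * I2 = 0 \<and>
      (L - m4') * R + r1 * I1 + r2 * I2 + r3 * I12 = 0)"

end

theory Submission
  imports Defs
begin

text \<open>On the boundary equilibrium G3 the equations for S and I1 pin the logistic factor
  L = b (1 - N/K) to m0 + a1 I1 = m1 - a1 S, and the R-equation gives
  (m4' - L) R = r1 I1 > 0. So the deficit d = m4' - L is positive, S and I1 are within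
  d/a1 of their limits, and N = K (1 - L/b) forces R \<ge> K (b - m4')/(2b) for large K.
  Then d = r1 I1 / R = O(1/K), which yields all three expansions.\<close>

lemma equilibrium_G3_equations:
  assumes "is_equilibrium b K a1 a2 a3 be1 be2 g1 g2 e1 e2 r1 r2 r3 m0 m1 m2 m3 m4' S I1 0 0 R"
    and "S \<noteq> 0" "I1 \<noteq> 0"
  shows "logistic b K (S + I1 + R) = m0 + a1 * I1"
    and "logistic b K (S + I1 + R) = m1 - a1 * S"
    and "(logistic b K (S + I1 + R) - m4') * R + r1 * I1 = 0"
proof -
  let ?L = "logistic b K (S + I1 + R)"
  have "(?L - a1 * I1 - m0) * S = 0" "(?L + a1 * S - m1) * I1 = 0"
    and "(?L - m4') * R + r1 * I1 = 0"
    using assms(1) by (simp_all add: is_equilibrium_def Let_def)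
  with assms(2,3) show "?L = m0 + a1 * I1" "?L = m1 - a1 * S" "(?L - m4') * R + r1 * I1 = 0"
    by simp_all
qed

lemma G3_deficit_relations:
  fixes L a1 r1 m0 m1 m4' S I1 R :: real
  assumes "L = m0 + a1 * I1" "L = m1 - a1 * S" "(L - m4') * R + r1 * I1 = 0"
    and "a1 > 0" "r1 > 0" "S > 0" "I1 > 0" "R > 0"
  shows "L < m4'"
    and "R * (m4' - L) = r1 * I1"
    and "I1 - (m4' - m0) / a1 = - (m4' - L) / a1"
    and "S - (m1 - m4') / a1 = (m4' - L) / a1"
    and "I1 < (m4' - m0) / a1"
    and "S < (m1 - m0) / a1"
proof -
  show R_deficit: "R * (m4' - L) = r1 * I1"
    using assms(3) by (simp add: algebra_simps)
  with assms(5,7) have "0 < R * (m4' - L)" by simp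
  with assms(8) have "0 < m4' - L" using zero_less_mult_pos by blast
  then show "L < m4'" by simp
  with assms(1,4) show "I1 < (m4' - m0) / a1" by (simp add: pos_less_divide_eq mult.commute)
  from assms(1,2,4) show "I1 - (m4' - m0) / a1 = - (m4' - L) / a1"
    and "S - (m1 - m4') / a1 = (m4' - L) / a1" by (simp_all add: field_simps)
  have "a1 * I1 > 0" using assms(4,7) by simp
  with assms(1,2,4) show "S < (m1 - m0) / a1" by (simp add: pos_less_divide_eq mult.commute)
qed

lemma logistic_recovered_excess:
  assumes "b > 0" "K > 0"
  shows "R - K / b * (b - m4') = K * (m4' - logistic b K (S + I1 + R)) / b - S - I1"
  using assms by (simp add: logistic_def field_simps)

lemma G3_estimates:
  fixes b K a1 r1 m0 m1 m4' S I1 R :: real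
  defines "L \<equiv> logistic b K (S + I1 + R)"
    and "q \<equiv> (b - m4') / b" and "c1 \<equiv> (m4' - m0) / a1" and "s0 \<equiv> (m1 - m0) / a1"
  assumes "L = m0 + a1 * I1" "L = m1 - a1 * S" "(L - m4') * R + r1 * I1 = 0"
    and "b > 0" "a1 > 0" "r1 > 0" "m4' < b" "S > 0" "I1 > 0" "R > 0"
    and K: "K > 0" "q * K > 2 * (s0 + c1)"
  shows "\<bar>I1 - c1\<bar> \<le> 2 * r1 * c1 / (q * a1) * (1 / K)"
    and "\<bar>S - (m1 - m4') / a1\<bar> \<le> 2 * r1 * c1 / (q * a1) * (1 / K)"
    and "\<bar>R - K / b * (b - m4')\<bar> \<le> 2 * r1 * c1 / (q * b) + s0 + c1"
    and "R \<ge> q / 2 * K"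
proof -
  define d where "d = m4' - L"
  note deficit = G3_deficit_relations[OF assms(5-7,9,10,12-14), folded d_def c1_def s0_def]
  have d: "d > 0" using deficit(1) by (simp add: d_def)
  have q: "q > 0" using \<open>m4' < b\<close> \<open>b > 0\<close> by (simp add: q_def)
  have excess: "R - K / b * (b - m4') = K * d / b - S - I1"
    using logistic_recovered_excess[OF \<open>b > 0\<close> \<open>K > 0\<close>] by (simp add: d_def L_def)
  have "K / b * (b - m4') = q * K" by (simp add: q_def)
  moreover have Kd_nonneg: "K * d / b \<ge> 0" using d K \<open>b > 0\<close> by simp
  ultimately have "R \<ge> q * K - S - I1" using excess by linarith
  then show R_lower: "R \<ge> q / 2 * K" using K(2) deficit(5,6) by simp
  have "R * d < r1 * c1" using deficit(2,5) \<open>r1 > 0\<close> by (simp add: d_def)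
  moreover have "q / 2 * K * d \<le> R * d" using R_lower d by (simp add: mult_right_mono)
  ultimately have "d \<le> 2 * r1 * c1 / (q * K)" using q K by (simp add: field_simps)
  then have d_bound: "d / a1 \<le> 2 * r1 * c1 / (q * a1) * (1 / K)" and
    "K * d / b \<le> 2 * r1 * c1 / (q * b)"
    using \<open>a1 > 0\<close> \<open>b > 0\<close> K(1) q by (simp_all add: field_simps)
  then show "\<bar>R - K / b * (b - m4')\<bar> \<le> 2 * r1 * c1 / (q * b) + s0 + c1"
    unfolding abs_le_iff using excess Kd_nonneg deficit(5,6) \<open>S > 0\<close> \<open>I1 > 0\<close>
    by linarith
  show "\<bar>I1 - c1\<bar> \<le> 2 * r1 * c1 / (q * a1) * (1 / K)"
    "\<bar>S - (m1 - m4') / a1\<bar> \<le> 2 * r1 * c1 / (q * a1) * (1 / K)"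
    using deficit(3,4) d_bound d \<open>a1 > 0\<close> by (simp_all add: d_def)
qed

theorem mainTheorem10:
  fixes b a1 a2 a3 be1 be2 g1 g2 e1 e2 r1 r2 r3 m0 m1' m2' m3' m4' m1 m2 m3 :: real
    and S I1 R :: "real \<Rightarrow> real"
  assumes pos: "b > 0" "a1 > 0" "a2 > 0" "a3 > 0" "be1 > 0" "be2 > 0" "g1 > 0" "g2 > 0"
      "e1 > 0" "e2 > 0" "r1 > 0" "r2 > 0" "r3 > 0" "m0 > 0"
      "m1' > 0" "m2' > 0" "m3' > 0" "m4' > 0"
    and mu_def: "m1 = r1 + m1'" "m2 = r2 + m2'" "m3 = r3 + m3'"
    and standing: "b > m0" "b > m1" "b > m2" "b > m3" "b > m4'"
      "m0 < m4'" "m4' < m1'" "m4' < m2'" "m4' < m3'"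
    and sigma: "(m1 - m0) / a1 < (m2 - m0) / a2" "(m2 - m0) / a2 < (m3 - m0) / a3"
    and G3: "\<And>K. K > b * ((m1 - m0) / a1) / (b - m0) \<Longrightarrow>
        S K > 0 \<and> I1 K > 0 \<and> R K > 0 \<and>
        is_equilibrium b K a1 a2 a3 be1 be2 g1 g2 e1 e2 r1 r2 r3 m0 m1 m2 m3 m4'
          (S K) (I1 K) 0 0 (R K)"
  shows "(\<lambda>K. R K - K / b * (b - m4')) \<in> O[at_top](\<lambda>_. 1) \<and>
    (\<lambda>K. I1 K - (m4' - m0) / a1) \<in> O[at_top](\<lambda>K. 1 / K) \<and>
    (\<lambda>K. S K - (m1 - m4') / a1) \<in> O[at_top](\<lambda>K. 1 / K) \<and>
    filterlim R at_top at_top"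
proof -
  define q where "q = (b - m4') / b"
  define c1 where "c1 = (m4' - m0) / a1"
  define s0 where "s0 = (m1 - m0) / a1"
  have q: "q > 0" using pos standing by (simp add: q_def)
  have large: "\<forall>\<^sub>F K in at_top. K > b * ((m1 - m0) / a1) / (b - m0) \<and> K > 0 \<and>
      q * K > 2 * (s0 + c1)"
  proof (intro eventually_conj eventually_gt_at_top)
    show "\<forall>\<^sub>F K in at_top. q * K > 2 * (s0 + c1)"
      using eventually_gt_at_top[of "2 * (s0 + c1) / q"]
      by eventually_elim (use q in \<open>simp add: field_simps\<close>)
  qed
  define C where "C = 2 * r1 * c1 / (q * a1)"
  define C' where "C' = 2 * r1 * c1 / (q * b) + s0 + c1"
  have est: "\<forall>\<^sub>F K in at_top. norm (I1 K - c1) \<le> C * norm (1 / K) \<and>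
      norm (S K - (m1 - m4') / a1) \<le> C * norm (1 / K) \<and>
      norm (R K - K / b * (b - m4')) \<le> C' * norm (1 :: real) \<and> R K \<ge> q / 2 * K"
    using large
  proof eventually_elim
    case (elim K)
    with G3 have "S K > 0" "I1 K > 0" "R K > 0"
      and eq: "is_equilibrium b K a1 a2 a3 be1 be2 g1 g2 e1 e2 r1 r2 r3 m0 m1 m2 m3 m4'
          (S K) (I1 K) 0 0 (R K)" by auto
    with elim G3_estimates[OF equilibrium_G3_equations[OF eq] _ _ _ standing(5)] pos
    show ?case by (simp add: q_def c1_def s0_def C_def C'_def)
  qed
  have "filterlim (\<lambda>K. q / 2 * K) at_top at_top"
    using q by (intro filterlim_tendsto_pos_mult_at_top[OF tendsto_const _ filterlim_ident]) auto
  then have "filterlim R at_top at_top"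
    by (rule filterlim_at_top_mono) (use est in \<open>eventually_elim, simp\<close>)
  moreover have "(\<lambda>K. R K - K / b * (b - m4')) \<in> O[at_top](\<lambda>_. 1)"
    by (intro bigoI[where c = C'] eventually_mono[OF est]) blast
  moreover have "(\<lambda>K. I1 K - c1) \<in> O[at_top](\<lambda>K. 1 / K)"
    by (intro bigoI[where c = C] eventually_mono[OF est]) blast
  moreover have "(\<lambda>K. S K - (m1 - m4') / a1) \<in> O[at_top](\<lambda>K. 1 / K)"
    by (intro bigoI[where c = C] eventually_mono[OF est]) blast
  ultimately show ?thesis unfolding c1_def by blast
qed

end
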